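(* Let $\lambda_1,\dots,\lambda_T\in\mathbb{R}$ and $\theta_1,\dots,\theta_T\ge 0$ with $\theta_T>0$ (in the paper $\lambda_t=\alpha_t\ell_t$ and $\theta_t=\alpha_t\rho_t$ are the weights of the mean and of the variance of $x_t$). Consider the problem $$\max_{\text{admissible }(u_0,\dots,u_{T-1})}\ \sum_{t=1}^{T}\big[\lambda_t\,\mathbb{E}(x_t)-\theta_t\,\mathrm{Var}(x_t)\big]$$ subject to $x_{t+1}=s_tx_t+P_t'u_t$, $t=0,\dots,T-1$. Define backward recursions by $p_T=\theta_T$, $q_T=\lambda_T$ and, for $t=T-1,\dots,1$, $$p_t=\theta_t+s_t^2(1-B_t)p_{t+1},\qquad q_t=\lambda_t+s_tq_{t+1}.$$ Then $p_t>0$ for all $t$. Define the deterministic sequence $\bar x_0=x_0$ and $$\bar x_{t+1}=s_t\bar x_t+\frac{q_{t+1}}{2p_{t+1}}\cdot\frac{B_t}{1-B_t},\qquad t=0,\dots,T-1.$$ Equivalently, $$\bar x_t=x_0\prod_{k=0}^{t-1}s_k+\sum_{j=0}^{t-1}\frac{q_{j+1}}{2p_{j+1}}\cdot\frac{B_j}{1-B_j}\prod_{l=j+1}^{t-1}s_l .$$ Then the feedback strategy $$u_t^*=-s_t\,(x_t-\bar x_t)\,K_t+\frac{q_{t+1}}{2p_{t+1}}\cdot\frac{K_t}{1-B_t},\qquad t=0,\dots,T-1,$$ is optimal for this problem. Moreover, under $u^*$ the following hold for every $t$: - $\mathbb{E}(x_t)=\bar x_t$; - $u_t^*-\mathbb{E}(u_t^*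 )=-s_t\big(x_t-\mathbb{E}(x_t)\big)K_t$; - $\mathbb{E}(u_t^* )=\frac{q_{t+1}}{2p_{t+1}}\cdot\frac{K_t}{1-B_t}$.
   Context: Market model. Fix integers $T\ge1$ and $n\ge1$. For $t=0,\dots,T-1$ the following are given: - a deterministic riskless gross return $s_t>1$; - a random excess-return vector $P_t\in\mathbb{R}^n$, where $P_t^i=e_t^i-s_t$ and $e_t^i$ is the gross return of risky asset $i$. The vectors $P_0,\dots,P_{T-1}$ are independent and square integrable. Write $M_t=\mathbb{E}(P_tP_t')$ and $m_t=\mathbb{E}(P_t)$, and assume $M_t$ is positive definite. Set $$B_t=m_t'M_t^{-1}m_t,\qquad K_t=M_t^{-1}m_t\in\mathbb{R}^n,$$ and assume $0<B_t<1$ for all $t$ (in the paper $B_t<1$ follows from positive definiteness of the return covariance, and $B_t>0$ holds when $m_t\ne0$). Wealth and strategies. The initial wealth $x_0\in\mathbb{R}$ is deterministic, and the wealth evolves as $x_{t+1}=s_tx_t+P_t'u_t$, where $u_t\in\mathbb{R}^n$ is the vector of amounts invested in the risky assets during period $t$. A strategy $(u_0,\dots,u_{T-1})$ is admissible if each $u_t$ is square integrable and measurable with respect to $\mathcal{F}_t=\sigma(P_0,\dots,P_{t-1})$ ($\mathcal{F}_0$ trivial); in particular $u_t$ is independent of $P_t$. Conventions: $\mathrm{Var}$ denotes variance, an empty product equals $1$, and an empty sum equals $0$. *)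

theory Defs
  imports "HOL-Probability.Probability"
begin

definition filt :: "'a measure \<Rightarrow> (nat \<Rightarrow> 'a \<Rightarrow> real^'n) \<Rightarrow> nat \<Rightarrow> 'a measure" where
  "filt M P t = sigma (space M) {P k -` A \<inter> space M | k A. k < t \<and> A \<in> sets borel}"

primrec wealth :: "real \<Rightarrow> (nat \<Rightarrow> real) \<Rightarrow> (nat \<Rightarrow> 'a \<Rightarrow> real^'n) \<Rightarrow> (nat \<Rightarrow> 'a \<Rightarrow> real^'n)
    \<Rightarrow> nat \<Rightarrow> 'a \<Rightarrow> real" where
  "wealth x0 s P u 0 = (\<lambda>\<omega>. x0)"
| "wealth x0 s P u (Suc t) = (\<lambda>\<omega>. s t * wealth x0 s P u t \<omega> + P t \<omega> \<bullet> u t \<omega>)"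

primrec fb_wealth :: "real \<Rightarrow> (nat \<Rightarrow> real) \<Rightarrow> (nat \<Rightarrow> 'a \<Rightarrow> real^'n) \<Rightarrow> (nat \<Rightarrow> real \<Rightarrow> real^'n)
    \<Rightarrow> nat \<Rightarrow> 'a \<Rightarrow> real" where
  "fb_wealth x0 s P \<phi> 0 = (\<lambda>\<omega>. x0)"
| "fb_wealth x0 s P \<phi> (Suc t) = (\<lambda>\<omega>. s t * fb_wealth x0 s P \<phi> t \<omega> + P t \<omega> \<bullet> \<phi> t (fb_wealth x0 s P \<phi> t \<omega>))"

definition admissible :: "'a measure \<Rightarrow> (nat \<Rightarrow> 'a \<Rightarrow> real^'n) \<Rightarrow> nat \<Rightarrow> (nat \<Rightarrow> 'a \<Rightarrow> real^'n) \<Rightarrow> bool" where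
  "admissible M P T u \<longleftrightarrow>
     (\<forall>t<T. u t \<in> borel_measurable (filt M P t) \<and> integrable M (\<lambda>\<omega>. (norm (u t \<omega>))\<^sup>2))"

definition objective :: "'a measure \<Rightarrow> real \<Rightarrow> (nat \<Rightarrow> real) \<Rightarrow> (nat \<Rightarrow> 'a \<Rightarrow> real^'n)
    \<Rightarrow> (nat \<Rightarrow> real) \<Rightarrow> (nat \<Rightarrow> real) \<Rightarrow> nat \<Rightarrow> (nat \<Rightarrow> 'a \<Rightarrow> real^'n) \<Rightarrow> real" where
  "objective M x0 s P lam \<theta> T u =
     (\<Sum>t=1..T. lam t * integral\<^sup>L M (wealth x0 s P u t)
        - \<theta> t * integral\<^sup>L M (\<lambda>\<omega>. (wealth x0 s P u t \<omega> - integral\<^sup>L M (wealth x0 s P u t))\<^sup>2))"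

function pcoef :: "nat \<Rightarrow> (nat \<Rightarrow> real) \<Rightarrow> (nat \<Rightarrow> real) \<Rightarrow> (nat \<Rightarrow> real) \<Rightarrow> nat \<Rightarrow> real" where
  "pcoef T \<theta> s B t = (if T \<le> t then \<theta> T else \<theta> t + (s t)\<^sup>2 * (1 - B t) * pcoef T \<theta> s B (Suc t))"
  by auto
termination by (relation "Wellfounded.measure (\<lambda>(T, _, _, _, t). T - t)") auto

function qcoef :: "nat \<Rightarrow> (nat \<Rightarrow> real) \<Rightarrow> (nat \<Rightarrow> real) \<Rightarrow> nat \<Rightarrow> real" where
  "qcoef T lam s t = (if T \<le> t then lam T else lam t + s t * qcoef T lam s (Suc t))"
  by auto
termination by (relation "Wellfounded.measure (\<lambda>(T, _, _, t). T - t)") auto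

primrec xbar :: "real \<Rightarrow> (nat \<Rightarrow> real) \<Rightarrow> (nat \<Rightarrow> real) \<Rightarrow> nat \<Rightarrow> real" where
  "xbar x0 s c 0 = x0"
| "xbar x0 s c (Suc t) = s t * xbar x0 s c t + c t"


definition meanv :: "'a measure \<Rightarrow> (nat \<Rightarrow> 'a \<Rightarrow> real^'n) \<Rightarrow> nat \<Rightarrow> real^'n" where
  "meanv M P t = integral\<^sup>L M (P t)"

definition secmom :: "'a measure \<Rightarrow> (nat \<Rightarrow> 'a \<Rightarrow> real^'n) \<Rightarrow> nat \<Rightarrow> real^'n^'n" where
  "secmom M P t = (\<chi> i j. integral\<^sup>L M (\<lambda>\<omega>. P t \<omega> $ i * P t \<omega> $ j))"

definition Bcoef :: "'a measure \<Rightarrow> (nat \<Rightarrow> 'a \<Rightarrow> real^'n) \<Rightarrow> nat \<Rightarrow> real" where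
  "Bcoef M P t = meanv M P t \<bullet> (matrix_inv (secmom M P t) *v meanv M P t)"

definition Kvec :: "'a measure \<Rightarrow> (nat \<Rightarrow> 'a \<Rightarrow> real^'n) \<Rightarrow> nat \<Rightarrow> real^'n" where
  "Kvec M P t = matrix_inv (secmom M P t) *v meanv M P t"


definition ustar_xbar :: "'a measure \<Rightarrow> (nat \<Rightarrow> 'a \<Rightarrow> real^'n) \<Rightarrow> real \<Rightarrow> (nat \<Rightarrow> real)
    \<Rightarrow> (nat \<Rightarrow> real) \<Rightarrow> (nat \<Rightarrow> real) \<Rightarrow> nat \<Rightarrow> nat \<Rightarrow> real" where
  "ustar_xbar M P x0 s lam \<theta> T =
     xbar x0 s (\<lambda>t. qcoef T lam s (Suc t) / (2 * pcoef T \<theta> s (Bcoef M P) (Suc t))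
                     * (Bcoef M P t / (1 - Bcoef M P t)))"

definition ustar_rule :: "'a measure \<Rightarrow> (nat \<Rightarrow> 'a \<Rightarrow> real^'n) \<Rightarrow> real \<Rightarrow> (nat \<Rightarrow> real)
    \<Rightarrow> (nat \<Rightarrow> real) \<Rightarrow> (nat \<Rightarrow> real) \<Rightarrow> nat \<Rightarrow> nat \<Rightarrow> real \<Rightarrow> real^'n" where
  "ustar_rule M P x0 s lam \<theta> T t xt =
     (- (s t * (xt - ustar_xbar M P x0 s lam \<theta> T t))) *\<^sub>R Kvec M P t
     + (qcoef T lam s (Suc t) / (2 * pcoef T \<theta> s (Bcoef M P) (Suc t)) / (1 - Bcoef M P t))
         *\<^sub>R Kvec M P t"

definition ustar_strategy :: "'a measure \<Rightarrow> (nat \<Rightarrow> 'a \<Rightarrow> real^'n) \<Rightarrow> real \<Rightarrow> (nat \<Rightarrow> real)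
    \<Rightarrow> (nat \<Rightarrow> real) \<Rightarrow> (nat \<Rightarrow> real) \<Rightarrow> nat \<Rightarrow> nat \<Rightarrow> 'a \<Rightarrow> real^'n" where
  "ustar_strategy M P x0 s lam \<theta> T t \<omega> =
     ustar_rule M P x0 s lam \<theta> T t (fb_wealth x0 s P (ustar_rule M P x0 s lam \<theta> T) t \<omega>)"

end

theory Submission
  imports Defs
begin

text \<open>
  Fix an admissible strategy \<open>u\<close> and write \<open>x\<^sub>t\<close> for its wealth. Since \<open>P\<^sub>t\<close> is independent of
  \<open>F\<^sub>t\<close>, one period of the wealth recursion gives \<open>E x\<^sub>t\<^sub>+\<^sub>1 = s\<^sub>t E x\<^sub>t + m\<^sub>t' E u\<^sub>t\<close> and
  \<open>Var x\<^sub>t\<^sub>+\<^sub>1 = s\<^sub>t\<^sup>2 (1 - B\<^sub>t) Var x\<^sub>t + R\<^sub>t\<close> with \<open>R\<^sub>t = E(z\<^sub>t' M\<^sub>t z\<^sub>t) - (m\<^sub>t' E u\<^sub>t)\<^sup>2\<close>, where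
  \<open>z\<^sub>t = u\<^sub>t + s\<^sub>t (x\<^sub>t - E x\<^sub>t) K\<^sub>t\<close> is the part of the control that does not hedge the current
  deviation of wealth from its mean. Summation by parts against the backward sequences \<open>p\<close>, \<open>q\<close>
  turns the objective into \<open>q\<^sub>1 s\<^sub>0 x\<^sub>0 + \<Sum>\<^sub>t (q\<^sub>t\<^sub>+\<^sub>1 m\<^sub>t' E u\<^sub>t - p\<^sub>t\<^sub>+\<^sub>1 R\<^sub>t)\<close>.
  By Jensen, \<open>R\<^sub>t \<ge> a' M\<^sub>t a - (m\<^sub>t' a)\<^sup>2\<close> for \<open>a = E u\<^sub>t\<close>, and by Cauchy--Schwarz
  \<open>(m\<^sub>t' a)\<^sup>2 \<le> B\<^sub>t a' M\<^sub>t a\<close>; maximising the resulting concave scalar expression bounds each period by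
  \<open>p\<^sub>t\<^sub>+\<^sub>1 (q\<^sub>t\<^sub>+\<^sub>1 / 2p\<^sub>t\<^sub>+\<^sub>1)\<^sup>2 B\<^sub>t / (1 - B\<^sub>t)\<close>. The feedback strategy \<open>u\<^sup>*\<close> makes \<open>z\<^sub>t\<close> the
  deterministic maximiser, so it attains every one of these bounds.
\<close>

section \<open>Quadratic forms\<close>

lemma matrix_mul_matrix_inv_right:
  fixes A :: "real^'n^'n"
  assumes "invertible A"
  shows "A ** matrix_inv A = mat 1"
proof -
  have "\<exists>A'. A ** A' = mat 1 \<and> A' ** A = mat 1" using assms unfolding invertible_def by blast
  then show ?thesis unfolding matrix_inv_def by (rule someI2_ex) blast
qed

lemma posdef_imp_invertible:
  fixes A :: "real^'n^'n"
  assumes "\<And>v. v \<noteq> 0 \<Longrightarrow> 0 < v \<bullet> (A *v v)"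
  shows "invertible A"
  unfolding invertible_left_inverse matrix_left_invertible_ker
  using assms by (metis inner_zero_right less_irrefl)

lemma symmetric_quadform_swap:
  fixes A :: "real^'n^'n"
  assumes "transpose A = A"
  shows "x \<bullet> (A *v y) = y \<bullet> (A *v x)"
proof -
  have "x \<bullet> (A *v y) = (x v* A) \<bullet> y" by (simp add: dot_lmul_matrix)
  also have "x v* A = A *v x" using vector_transpose_matrix[of x A] assms by simp
  finally show ?thesis by (simp add: inner_commute)
qed

lemma symmetric_quadform_add_scaleR:
  fixes A :: "real^'n^'n"
  assumes "transpose A = A"
  shows "(u + c *\<^sub>R K) \<bullet> (A *v (u + c *\<^sub>R K))
     = u \<bullet> (A *v u) + 2 * c * (K \<bullet> (A *v u)) + c\<^sup>2 * (K \<bullet> (A *v K))"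
proof -
  have "(u + c *\<^sub>R K) \<bullet> (A *v (u + c *\<^sub>R K))
     = u \<bullet> (A *v u) + c * (u \<bullet> (A *v K)) + (c * (K \<bullet> (A *v u)) + c * (c * (K \<bullet> (A *v K))))"
    by (simp only: matrix_vector_right_distrib matrix_vector_mult_scaleR inner_add_left
        inner_add_right inner_scaleR_left inner_scaleR_right) (simp add: algebra_simps)
  also have "u \<bullet> (A *v K) = K \<bullet> (A *v u)" using symmetric_quadform_swap[OF assms] .
  finally show ?thesis by (simp add: power2_eq_square)
qed

lemma quadform_as_double_sum:
  fixes A :: "real^'n^'n"
  shows "u \<bullet> (A *v u) = (\<Sum>i\<in>UNIV. \<Sum>j\<in>UNIV. A $ i $ j * (u $ i * u $ j))"
  by (simp add: inner_vec_def matrix_vector_mult_def sum_distrib_left algebra_simps)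


text \<open>Cauchy--Schwarz for the semi-inner product \<open>A\<close>, with \<open>m = A K\<close> (so \<open>m \<bullet> K = m' A\<^sup>-\<^sup>1 m\<close>):
  evaluate the form at \<open>a - (m \<bullet> a / m \<bullet> K) K\<close>.\<close>
lemma symmetric_psd_cauchy_schwarz:
  fixes A :: "real^'n^'n"
  assumes sym: "transpose A = A" and psd: "\<And>v. 0 \<le> v \<bullet> (A *v v)"
    and AK: "A *v K = m" and pos: "0 < m \<bullet> K"
  shows "(m \<bullet> a)\<^sup>2 \<le> (m \<bullet> K) * (a \<bullet> (A *v a))"
proof -
  define B y Q where "B = m \<bullet> K" and "y = m \<bullet> a" and "Q = a \<bullet> (A *v a)"
  have Ka: "K \<bullet> (A *v a) = y"
    using symmetric_quadform_swap[OF sym, of K a] AK by (simp add: y_def inner_commute)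
  have KK: "K \<bullet> (A *v K) = B" using AK by (simp add: B_def inner_commute)
  have "0 \<le> (a + (- y / B) *\<^sub>R K) \<bullet> (A *v (a + (- y / B) *\<^sub>R K))" by (rule psd)
  also have "\<dots> = Q + 2 * (- y / B) * y + (- y / B)\<^sup>2 * B"
    unfolding symmetric_quadform_add_scaleR[OF sym] Ka KK Q_def ..
  finally have "0 \<le> B * (Q + 2 * (- y / B) * y + (- y / B)\<^sup>2 * B)" using pos B_def by simp
  also have "\<dots> = B * Q - y\<^sup>2" using pos B_def by (simp add: field_simps power2_eq_square)
  finally show ?thesis by (simp add: y_def Q_def B_def)
qed

lemma mean_variance_tradeoff_le:
  fixes p q B y Q :: real
  assumes p: "0 < p" and B: "0 < B" "B < 1" and cs: "y\<^sup>2 \<le> B * Q"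
  shows "q * y - p * (Q - y\<^sup>2) \<le> p * (q / (2 * p))\<^sup>2 * B / (1 - B)"
proof -
  define c where "c = q / (2 * p)"
  have q: "q = 2 * p * c" using p by (simp add: c_def)
  have "y\<^sup>2 / B \<le> Q" using cs B by (simp add: field_simps)
  then have "q * y - p * (Q - y\<^sup>2) \<le> q * y - p * (y\<^sup>2 / B - y\<^sup>2)"
    using p by (simp add: mult_left_mono)
  also have "\<dots> = p * (2 * c * y - y\<^sup>2 * (1 - B) / B)" using B by (simp add: q field_simps)
  also have "\<dots> \<le> p * (c\<^sup>2 * B / (1 - B))"
  proof (rule mult_left_mono)
    have "0 \<le> (c * B - y * (1 - B))\<^sup>2 / (B * (1 - B))" using B by simp
    also have "\<dots> = c\<^sup>2 * B / (1 - B) - (2 * c * y - y\<^sup>2 * (1 - B) / B)"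
      using B by (simp add: field_simps power2_eq_square)
    finally show "2 * c * y - y\<^sup>2 * (1 - B) / B \<le> c\<^sup>2 * B / (1 - B)" by simp
  qed (use p in simp)
  finally show ?thesis by (simp add: c_def)
qed

lemma mean_variance_tradeoff_optimal:
  fixes A :: "real^'n^'n" and q p :: real
  assumes AK: "A *v K = m" and p: "0 < p" and B: "m \<bullet> K < 1"
  defines "a \<equiv> (q / (2 * p) / (1 - m \<bullet> K)) *\<^sub>R K"
  shows "q * (m \<bullet> a) - p * (a \<bullet> (A *v a) - (m \<bullet> a)\<^sup>2)
    = p * (q / (2 * p))\<^sup>2 * (m \<bullet> K) / (1 - m \<bullet> K)"
proof -
  define B r where "B = m \<bullet> K" and "r = q / (2 * p) / (1 - B)"
  have B1: "0 < 1 - B" using B B_def by simp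
  have ma: "m \<bullet> a = r * B" and aa: "a \<bullet> (A *v a) = r\<^sup>2 * B"
    by (simp_all add: a_def r_def B_def matrix_vector_mult_scaleR AK power2_eq_square inner_commute)
  have q: "q = 2 * p * (r * (1 - B))" using p B1 by (simp add: r_def)
  have "q * (m \<bullet> a) - p * (a \<bullet> (A *v a) - (m \<bullet> a)\<^sup>2) = p * r\<^sup>2 * (1 - B) * B"
    unfolding ma aa q by (simp add: power2_eq_square algebra_simps)
  also have "\<dots> = p * (q / (2 * p))\<^sup>2 * B / (1 - B)"
    using B1 p by (simp add: q power2_eq_square field_simps)
  finally show ?thesis by (simp add: B_def)
qed


section \<open>The backward recursions\<close>

declare pcoef.simps[simp del] qcoef.simps[simp del]

lemma pcoef_Suc: "t < T \<Longrightarrow> pcoef T \<theta> s B t = \<theta> t + (s t)\<^sup>2 * (1 - B t) * pcoef T \<theta> s B (Suc t)"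
  by (subst pcoef.simps) simp

lemma pcoef_terminal: "T \<le> t \<Longrightarrow> pcoef T \<theta> s B t = \<theta> T"
  by (subst pcoef.simps) simp

lemma qcoef_Suc: "t < T \<Longrightarrow> qcoef T lam s t = lam t + s t * qcoef T lam s (Suc t)"
  by (subst qcoef.simps) simp

lemma qcoef_terminal: "T \<le> t \<Longrightarrow> qcoef T lam s t = lam T"
  by (subst qcoef.simps) simp

lemma pcoef_pos:
  assumes "\<forall>t\<in>{1..T}. 0 \<le> \<theta> t" and "0 < \<theta> T" and "\<And>t. t < T \<Longrightarrow> B t < 1"
    and "\<And>t. t < T \<Longrightarrow> s t \<noteq> 0" and "1 \<le> t"
  shows "0 < pcoef T \<theta> s B t"
proof (cases "t \<le> T")
  case True
  then show ?thesis using \<open>1 \<le> t\<close>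
  proof (induction t rule: inc_induct)
    case (step n)
    have "s n \<noteq> 0" and "B n < 1" using step assms(3,4) by auto
    then have "0 < (s n)\<^sup>2 * (1 - B n) * pcoef T \<theta> s B (Suc n)"
      using step by simp
    moreover have "0 \<le> \<theta> n" using assms(1) step by auto
    ultimately show ?case using step by (simp add: pcoef_Suc)
  qed (use assms(2) in \<open>simp add: pcoef_terminal\<close>)
qed (use assms(2) in \<open>simp add: pcoef_terminal\<close>)

lemma xbar_eq_sum:
  "xbar x0 s c t = x0 * (\<Prod>k<t. s k) + (\<Sum>j<t. c j * (\<Prod>l\<in>{Suc j..<t}. s l))"
proof (induction t)
  case (Suc t)
  have "(\<Sum>j<t. c j * (\<Prod>l\<in>{Suc j..<Suc t}. s l)) = (\<Sum>j<t. c j * (\<Prod>l\<in>{Suc j..<t}. s l) * s t)"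
    by (rule sum.cong) (auto simp: prod.atLeastLessThan_Suc)
  then show ?case using Suc by (simp add: sum_distrib_left sum_distrib_right algebra_simps)
qed simp

text \<open>Summation by parts: \<open>pcoef\<close> and \<open>qcoef\<close> are the adjoints of the recursions for the variance
  \<open>V\<close> and the mean \<open>\<mu>\<close>.\<close>
lemma mean_variance_objective_telescope:
  fixes \<mu> V L h :: "nat \<Rightarrow> real"
  assumes T: "1 \<le> T"
    and \<mu>: "\<And>t. t < T \<Longrightarrow> \<mu> (Suc t) = s t * \<mu> t + L t" and "\<mu> 0 = x0"
    and V: "\<And>t. t < T \<Longrightarrow> V (Suc t) = (s t)\<^sup>2 * (1 - B t) * V t + h t" and "V 0 = 0"
  shows "(\<Sum>t=1..T. lam t * \<mu> t - \<theta> t * V t)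
    = qcoef T lam s 1 * s 0 * x0
      + (\<Sum>t<T. qcoef T lam s (Suc t) * L t - pcoef T \<theta> s B (Suc t) * h t)"
proof -
  define g where "g t = qcoef T lam s (Suc t) * L t - pcoef T \<theta> s B (Suc t) * h t" for t
  define f where "f t = lam t * \<mu> t - \<theta> t * V t" for t
  have tail: "(\<Sum>t=k..T. f t)
      = qcoef T lam s k * \<mu> k - pcoef T \<theta> s B k * V k + (\<Sum>t\<in>{k..<T}. g t)" if "k \<le> T" for k
    using that
  proof (induction k rule: inc_induct)
    case base
    then show ?case by (simp add: f_def pcoef_terminal qcoef_terminal)
  next
    case (step n)
    have "(\<Sum>t=n..T. f t) = f n + (\<Sum>t=Suc n..T. f t)"
      using step by (simp add: sum.atLeast_Suc_atMost)
    moreover have "(\<Sum>t\<in>{n..<T}. g t) = g n + (\<Sum>t\<in>{Suc n..<T}. g t)"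
      using step by (simp add: sum.atLeast_Suc_lessThan)
    ultimately show ?case
      using step \<mu>[of n] V[of n]
      by (simp add: f_def g_def qcoef_Suc pcoef_Suc algebra_simps)
  qed
  have "(\<Sum>t<T. g t) = g 0 + (\<Sum>t\<in>{1..<T}. g t)"
    using T by (simp add: lessThan_atLeast0 sum.atLeast_Suc_lessThan)
  then show ?thesis
    using tail[of 1] T \<mu>[of 0] V[of 0] assms(3,5) by (simp add: f_def g_def algebra_simps)
qed


section \<open>Square integrability\<close>

lemma measurable_vec_nth[measurable (raw)]:
  "f \<in> borel_measurable N \<Longrightarrow> (\<lambda>x. (f x :: real^'n) $ i) \<in> borel_measurable N"
  using measurable_compose[OF _ borel_measurable_nth] by blast

lemma integrable_scaleR_of_square_integrable:
  fixes f :: "'a \<Rightarrow> real" and u :: "'a \<Rightarrow> 'b::{banach, second_countable_topology}"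
  assumes [measurable]: "f \<in> borel_measurable M" "u \<in> borel_measurable M"
    and "integrable M (\<lambda>\<omega>. (f \<omega>)\<^sup>2)" "integrable M (\<lambda>\<omega>. (norm (u \<omega>))\<^sup>2)"
  shows "integrable M (\<lambda>\<omega>. f \<omega> *\<^sub>R u \<omega>)"
proof (rule Bochner_Integration.integrable_bound[where f="\<lambda>\<omega>. (f \<omega>)\<^sup>2 + (norm (u \<omega>))\<^sup>2"])
  show "AE \<omega> in M. norm (f \<omega> *\<^sub>R u \<omega>) \<le> norm ((f \<omega>)\<^sup>2 + (norm (u \<omega>))\<^sup>2)"
  proof (rule AE_I2)
    fix \<omega>
    have "\<bar>f \<omega>\<bar> * norm (u \<omega>) \<le> 2 * \<bar>f \<omega>\<bar> * norm (u \<omega>)" by simp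
    also have "\<dots> \<le> \<bar>f \<omega>\<bar>\<^sup>2 + (norm (u \<omega>))\<^sup>2" by (rule sum_squares_bound)
    finally show "norm (f \<omega> *\<^sub>R u \<omega>) \<le> norm ((f \<omega>)\<^sup>2 + (norm (u \<omega>))\<^sup>2)" by simp
  qed
qed (use assms in auto)

lemma integrable_mult_of_square_integrable:
  fixes f g :: "'a \<Rightarrow> real"
  assumes "f \<in> borel_measurable M" "g \<in> borel_measurable M"
    and "integrable M (\<lambda>\<omega>. (f \<omega>)\<^sup>2)" "integrable M (\<lambda>\<omega>. (g \<omega>)\<^sup>2)"
  shows "integrable M (\<lambda>\<omega>. f \<omega> * g \<omega>)"
  using integrable_scaleR_of_square_integrable[of f M g] assms by simp

lemma square_integrable_vec_nth:
  fixes u :: "'a \<Rightarrow> real^'n"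
  assumes "u \<in> borel_measurable M" and "integrable M (\<lambda>\<omega>. (norm (u \<omega>))\<^sup>2)"
  shows "integrable M (\<lambda>\<omega>. (u \<omega> $ i)\<^sup>2)"
proof (rule Bochner_Integration.integrable_bound[OF assms(2)])
  show "AE \<omega> in M. norm ((u \<omega> $ i)\<^sup>2) \<le> norm ((norm (u \<omega>))\<^sup>2)"
  proof (rule AE_I2)
    fix \<omega>
    have "\<bar>u \<omega> $ i\<bar>\<^sup>2 \<le> (norm (u \<omega>))\<^sup>2" by (rule power_mono[OF component_le_norm_cart]) simp
    then show "norm ((u \<omega> $ i)\<^sup>2) \<le> norm ((norm (u \<omega>))\<^sup>2)" by simp
  qed
qed (use assms in measurable)

lemma (in finite_measure) integrable_of_square_integrable_norm:
  fixes u :: "'a \<Rightarrow> 'b::{banach, second_countable_topology}"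
  assumes "u \<in> borel_measurable M" and "integrable M (\<lambda>\<omega>. (norm (u \<omega>))\<^sup>2)"
  shows "integrable M u"
  using square_integrable_imp_integrable[of "\<lambda>\<omega>. norm (u \<omega>)"] assms
  by (simp add: integrable_norm_iff)

lemma integral_vec_nth:
  fixes u :: "'a \<Rightarrow> real^'n"
  assumes "integrable M u"
  shows "integral\<^sup>L M u $ i = (\<integral>\<omega>. u \<omega> $ i \<partial>M)"
  using integral_bounded_linear[OF bounded_linear_vec_nth assms, of i] by simp

lemma integrable_quadform:
  fixes u :: "'a \<Rightarrow> real^'n" and A :: "real^'n^'n"
  assumes [measurable]: "u \<in> borel_measurable M" and "integrable M (\<lambda>\<omega>. (norm (u \<omega>))\<^sup>2)"
  shows "integrable M (\<lambda>\<omega>. u \<omega> \<bullet> (A *v u \<omega>))"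
proof -
  have "integrable M (\<lambda>\<omega>. u \<omega> $ i * u \<omega> $ j)" for i j
    by (rule integrable_mult_of_square_integrable) (use square_integrable_vec_nth[OF assms] in auto)
  then show ?thesis by (simp add: quadform_as_double_sum)
qed


section \<open>Independence of the excess return from the past\<close>

lemma admissible_mono: "admissible M P t' v \<Longrightarrow> t \<le> t' \<Longrightarrow> admissible M P t v"
  unfolding admissible_def by auto

lemma transpose_secmom: "transpose (secmom M P t) = secmom M P t"
  by (simp add: transpose_def secmom_def vec_eq_iff mult.commute)

lemma Bcoef_eq_inner_Kvec: "Bcoef M P t = meanv M P t \<bullet> Kvec M P t"
  by (simp add: Bcoef_def Kvec_def)

locale excess_returns = prob_space M for M :: "'a measure" +
  fixes P :: "nat \<Rightarrow> 'a \<Rightarrow> real^'n" and T :: nat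
  assumes P_measurable: "\<And>t. t < T \<Longrightarrow> P t \<in> borel_measurable M"
    and P_indep: "indep_vars (\<lambda>_. borel) P {..<T}"
    and P_square_integrable: "\<And>t. t < T \<Longrightarrow> integrable M (\<lambda>\<omega>. (norm (P t \<omega>))\<^sup>2)"
    and secmom_posdef: "\<And>t v. t < T \<Longrightarrow> v \<noteq> 0 \<Longrightarrow> 0 < v \<bullet> (secmom M P t *v v)"
begin

abbreviation "F t \<equiv> filt M P t"

lemma space_filt[simp]: "space (F t) = space M"
  unfolding filt_def by (simp add: space_measure_of_conv)

lemma sets_filt: "sets (F t) = sigma_sets (space M) {P k -` A \<inter> space M | k A. k < t \<and> A \<in> sets borel}"
  unfolding filt_def by (rule sets_measure_of) auto

lemma measurable_filt_imp_measurable: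
  assumes "t \<le> T" and "f \<in> borel_measurable (F t)"
  shows "f \<in> borel_measurable M"
proof (rule measurable_from_subalg[OF _ assms(2)])
  have "sets (F t) \<subseteq> sets M"
    unfolding sets_filt
    by (rule sets.sigma_sets_subset) (use assms(1) in \<open>auto intro!: measurable_sets P_measurable\<close>)
  then show "subalgebra M (F t)" unfolding subalgebra_def by simp
qed

lemma measurable_filt_mono:
  assumes "t \<le> t'" and "f \<in> borel_measurable (F t)"
  shows "f \<in> borel_measurable (F t')"
proof -
  have "sets (F t) \<subseteq> sets (F t')"
    unfolding sets_filt by (rule sigma_sets_mono') (use assms(1) in \<open>auto, blast intro: less_le_trans\<close>)
  then show ?thesis using assms(2) unfolding measurable_def by auto
qed

lemma P_measurable_filt: "k < t \<Longrightarrow> P k \<in> borel_measurable (F t)"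
  unfolding measurable_def by (auto simp: sets_filt intro!: sigma_sets.Basic)

lemma indep_set_filt_P:
  assumes "t < T"
  shows "indep_set (sets (F t)) (sigma_sets (space M) {P t -` A \<inter> space M | A. A \<in> sets borel})"
proof -
  define E where "E i = {P i -` A \<inter> space M | A. A \<in> sets borel}" for i
  have "indep_sets E {..<T}" using P_indep unfolding indep_vars_def2 E_def by auto
  then have "indep_sets E (\<Union>j. case_bool {..<t} {t} j)"
    by (rule indep_sets_mono_index[rotated]) (use assms in \<open>auto split: bool.splits\<close>)
  then have "indep_sets (\<lambda>j. sigma_sets (space M) (\<Union>i\<in>case_bool {..<t} {t} j. E i)) UNIV"
  proof (rule indep_sets_collect_sigma)
    show "Int_stable (E i)" for i
    proof (rule Int_stableI)
      fix a b assume "a \<in> E i" "b \<in> E i"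
      then obtain A B where "a = P i -` A \<inter> space M" "b = P i -` B \<inter> space M"
        and "A \<in> sets borel" "B \<in> sets borel" by (auto simp: E_def)
      then show "a \<inter> b \<in> E i" unfolding E_def by (intro CollectI exI[of _ "A \<inter> B"]) auto
    qed
  qed (auto simp: E_def disjoint_family_on_def split: bool.splits)
  moreover have "(\<Union>i<t. E i) = {P k -` A \<inter> space M | k A. k < t \<and> A \<in> sets borel}"
    by (auto simp: E_def)
  ultimately show ?thesis
    unfolding indep_set_def
    by (elim indep_sets_mono_sets) (auto simp: sets_filt E_def split: bool.splits)
qed

lemma indep_var_filt_P:
  fixes X :: "'a \<Rightarrow> real" and g :: "real^'n \<Rightarrow> real"
  assumes t: "t < T" and X: "X \<in> borel_measurable (F t)" and g: "g \<in> borel_measurable borel"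
  shows "indep_var borel X borel (\<lambda>\<omega>. g (P t \<omega>))"
  unfolding indep_var_eq
proof (intro conjI)
  show "random_variable borel X" using measurable_filt_imp_measurable[OF _ X] t by simp
  show "random_variable borel (\<lambda>\<omega>. g (P t \<omega>))" using P_measurable[OF t] g by measurable
  have "sigma_sets (space M) {X -` A \<inter> space M |A. A \<in> sets borel} \<subseteq> sets (F t)"
    using sets.sigma_sets_subset[of "{X -` A \<inter> space M |A. A \<in> sets borel}" "F t"]
      measurable_sets[OF X] by auto
  moreover have "sigma_sets (space M) {(\<lambda>\<omega>. g (P t \<omega>)) -` A \<inter> space M |A. A \<in> sets borel}
      \<subseteq> sigma_sets (space M) {P t -` A \<inter> space M | A. A \<in> sets borel}"
  proof (rule sigma_sets_mono', safe)
    fix A :: "real set" assume "A \<in> sets borel"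
    then have "g -` A \<in> sets borel" using measurable_sets[OF g] by simp
    moreover have "(\<lambda>\<omega>. g (P t \<omega>)) -` A \<inter> space M = P t -` (g -` A) \<inter> space M" by auto
    ultimately show "\<exists>B. (\<lambda>\<omega>. g (P t \<omega>)) -` A \<inter> space M = P t -` B \<inter> space M \<and> B \<in> sets borel"
      by blast
  qed
  ultimately show "indep_set (sigma_sets (space M) {X -` A \<inter> space M |A. A \<in> sets borel})
     (sigma_sets (space M) {(\<lambda>\<omega>. g (P t \<omega>)) -` A \<inter> space M |A. A \<in> sets borel})"
    using indep_set_filt_P[OF t] unfolding indep_set_def
    by (rule_tac indep_sets_mono_sets) (auto split: bool.splits)
qed

lemma indep_filt_P_integral_mult:
  fixes X :: "'a \<Rightarrow> real" and g :: "real^'n \<Rightarrow> real"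
  assumes "t < T" and "X \<in> borel_measurable (F t)" and "g \<in> borel_measurable borel"
    and "integrable M X" and "integrable M (\<lambda>\<omega>. g (P t \<omega>))"
  shows "integrable M (\<lambda>\<omega>. X \<omega> * g (P t \<omega>))"
    and "(\<integral>\<omega>. X \<omega> * g (P t \<omega>) \<partial>M) = expectation X * expectation (\<lambda>\<omega>. g (P t \<omega>))"
  using indep_var_integrable indep_var_lebesgue_integral indep_var_filt_P[OF assms(1-3)] assms(4,5)
  by auto

end


section \<open>One-period moments of wealth\<close>

context excess_returns
begin

lemma P_vec_nth_square_integrable:
  "t < T \<Longrightarrow> integrable M (\<lambda>\<omega>. (P t \<omega> $ i)\<^sup>2)"
  by (rule square_integrable_vec_nth[OF P_measurable P_square_integrable])

lemma integrable_P: "t < T \<Longrightarrow> integrable M (P t)"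
  by (rule integrable_of_square_integrable_norm[OF P_measurable P_square_integrable])

lemma inner_P_integral:
  assumes t: "t < T" and w: "w \<in> borel_measurable (F t)" "integrable M w"
  shows "integrable M (\<lambda>\<omega>. P t \<omega> \<bullet> w \<omega>)"
    and "expectation (\<lambda>\<omega>. P t \<omega> \<bullet> w \<omega>) = meanv M P t \<bullet> expectation w"
proof -
  have eq: "(\<lambda>\<omega>. P t \<omega> \<bullet> w \<omega>) = (\<lambda>\<omega>. \<Sum>i\<in>UNIV. w \<omega> $ i * P t \<omega> $ i)"
    by (simp add: inner_vec_def mult.commute)
  have "(\<lambda>\<omega>. w \<omega> $ i) \<in> borel_measurable (F t)" for i using w(1) by measurable
  note indep = indep_filt_P_integral_mult[OF t this borel_measurable_nth
      integrable_bounded_linear[OF bounded_linear_vec_nth w(2)]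
      integrable_bounded_linear[OF bounded_linear_vec_nth integrable_P[OF t]]]
  show "integrable M (\<lambda>\<omega>. P t \<omega> \<bullet> w \<omega>)" unfolding eq using indep(1) by auto
  show "expectation (\<lambda>\<omega>. P t \<omega> \<bullet> w \<omega>) = meanv M P t \<bullet> expectation w"
    unfolding eq using indep integral_vec_nth[OF w(2)] integral_vec_nth[OF integrable_P[OF t]]
    by (simp add: inner_vec_def meanv_def mult.commute)
qed

lemma inner_P_square_integral:
  assumes t: "t < T" and w: "w \<in> borel_measurable (F t)" "integrable M (\<lambda>\<omega>. (norm (w \<omega>))\<^sup>2)"
  shows "integrable M (\<lambda>\<omega>. (P t \<omega> \<bullet> w \<omega>)\<^sup>2)"
    and "expectation (\<lambda>\<omega>. (P t \<omega> \<bullet> w \<omega>)\<^sup>2) = expectation (\<lambda>\<omega>. w \<omega> \<bullet> (secmom M P t *v w \<omega>))"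
proof -
  have wM[measurable]: "w \<in> borel_measurable M" using measurable_filt_imp_measurable[OF _ w(1)] t by simp
  have PM[measurable]: "P t \<in> borel_measurable M" using P_measurable[OF t] .
  have eq: "(\<lambda>\<omega>. (P t \<omega> \<bullet> w \<omega>)\<^sup>2)
      = (\<lambda>\<omega>. \<Sum>i\<in>UNIV. \<Sum>j\<in>UNIV. (w \<omega> $ i * w \<omega> $ j) * (P t \<omega> $ i * P t \<omega> $ j))"
    by (simp add: inner_vec_def power2_eq_square sum_product algebra_simps)
  have ww: "(\<lambda>\<omega>. w \<omega> $ i * w \<omega> $ j) \<in> borel_measurable (F t)" for i j using w(1) by measurable
  have pp: "(\<lambda>p::real^'n. p $ i * p $ j) \<in> borel_measurable borel" for i j by measurable
  have iww: "integrable M (\<lambda>\<omega>. w \<omega> $ i * w \<omega> $ j)" for i j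
    by (rule integrable_mult_of_square_integrable) (use square_integrable_vec_nth[OF wM w(2)] in auto)
  have iPP: "integrable M (\<lambda>\<omega>. P t \<omega> $ i * P t \<omega> $ j)" for i j
    by (rule integrable_mult_of_square_integrable) (use P_vec_nth_square_integrable[OF t] in auto)
  note indep = indep_filt_P_integral_mult[OF t ww pp iww iPP]
  show "integrable M (\<lambda>\<omega>. (P t \<omega> \<bullet> w \<omega>)\<^sup>2)" unfolding eq using indep(1) by auto
  have "expectation (\<lambda>\<omega>. (P t \<omega> \<bullet> w \<omega>)\<^sup>2)
      = (\<Sum>i\<in>UNIV. \<Sum>j\<in>UNIV. expectation (\<lambda>\<omega>. w \<omega> $ i * w \<omega> $ j) * secmom M P t $ i $ j)"
    unfolding eq using indep by (simp add: Bochner_Integration.integral_sum integrable_sum secmom_def)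
  also have "\<dots> = expectation (\<lambda>\<omega>. w \<omega> \<bullet> (secmom M P t *v w \<omega>))"
    unfolding quadform_as_double_sum using iww
    by (simp add: Bochner_Integration.integral_sum integrable_sum mult.commute)
  finally show "expectation (\<lambda>\<omega>. (P t \<omega> \<bullet> w \<omega>)\<^sup>2) = expectation (\<lambda>\<omega>. w \<omega> \<bullet> (secmom M P t *v w \<omega>))" .
qed

lemma admissible_SucD:
  assumes "admissible M P (Suc t) v" and "t < T"
  shows "v t \<in> borel_measurable (F t)" and "v t \<in> borel_measurable M"
    and "integrable M (\<lambda>\<omega>. (norm (v t \<omega>))\<^sup>2)" and "integrable M (v t)"
proof -
  show vF: "v t \<in> borel_measurable (F t)" and sq: "integrable M (\<lambda>\<omega>. (norm (v t \<omega>))\<^sup>2)"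
    using assms unfolding admissible_def by auto
  show vM: "v t \<in> borel_measurable M" using measurable_filt_imp_measurable[OF _ vF] assms(2) by simp
  show "integrable M (v t)" by (rule integrable_of_square_integrable_norm[OF vM sq])
qed

lemma wealth_measurable_filt:
  "admissible M P t v \<Longrightarrow> t \<le> T \<Longrightarrow> wealth x0 s P v t \<in> borel_measurable (F t)"
proof (induction t)
  case (Suc t)
  have [measurable]: "wealth x0 s P v t \<in> borel_measurable (F (Suc t))"
    using Suc measurable_filt_mono[of t "Suc t"] admissible_mono[of M P "Suc t" v t] by auto
  have [measurable]: "P t \<in> borel_measurable (F (Suc t))" by (rule P_measurable_filt) simp
  have [measurable]: "v t \<in> borel_measurable (F (Suc t))"
    using Suc measurable_filt_mono[of t "Suc t"] unfolding admissible_def by auto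
  show ?case by simp
qed simp

lemma wealth_measurable:
  "admissible M P t v \<Longrightarrow> t \<le> T \<Longrightarrow> wealth x0 s P v t \<in> borel_measurable M"
  by (rule measurable_filt_imp_measurable[OF _ wealth_measurable_filt])

lemma wealth_square_integrable:
  "admissible M P t v \<Longrightarrow> t \<le> T \<Longrightarrow> integrable M (\<lambda>\<omega>. (wealth x0 s P v t \<omega>)\<^sup>2)"
proof (induction t)
  case (Suc t)
  then have t: "t < T" and v: "admissible M P t v" using admissible_mono[of M P "Suc t" v t] by auto
  note vt = admissible_SucD[OF Suc.prems(1) t]
  let ?x = "wealth x0 s P v t" and ?y = "\<lambda>\<omega>. P t \<omega> \<bullet> v t \<omega>"
  have [measurable]: "?x \<in> borel_measurable M" "P t \<in> borel_measurable M" "v t \<in> borel_measurable M"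
    using wealth_measurable[OF v] P_measurable vt t by auto
  have x2: "integrable M (\<lambda>\<omega>. (?x \<omega>)\<^sup>2)" using Suc v t by simp
  have y2: "integrable M (\<lambda>\<omega>. (?y \<omega>)\<^sup>2)" by (rule inner_P_square_integral[OF t vt(1,3)])
  have xy: "integrable M (\<lambda>\<omega>. ?x \<omega> * ?y \<omega>)"
    by (rule integrable_mult_of_square_integrable[OF _ _ x2 y2]) measurable
  have "(\<lambda>\<omega>. (wealth x0 s P v (Suc t) \<omega>)\<^sup>2)
      = (\<lambda>\<omega>. (s t)\<^sup>2 * (?x \<omega>)\<^sup>2 + (2 * s t) * (?x \<omega> * ?y \<omega>) + (?y \<omega>)\<^sup>2)"
    by (simp add: power2_eq_square algebra_simps)
  moreover have "integrable M (\<lambda>\<omega>. (s t)\<^sup>2 * (?x \<omega>)\<^sup>2 + (2 * s t) * (?x \<omega> * ?y \<omega>) + (?y \<omega>)\<^sup>2)"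
    using x2 xy y2 by (intro Bochner_Integration.integrable_add integrable_mult_right)
  ultimately show ?case by (simp only:)
qed simp

lemma integrable_wealth:
  "admissible M P t v \<Longrightarrow> t \<le> T \<Longrightarrow> integrable M (wealth x0 s P v t)"
  by (rule square_integrable_imp_integrable[OF wealth_measurable wealth_square_integrable])

end

lemma (in prob_space) quadform_expectation_le:
  fixes z :: "'a \<Rightarrow> real^'n" and A :: "real^'n^'n"
  assumes sym: "transpose A = A" and psd: "\<And>v. 0 \<le> v \<bullet> (A *v v)"
    and z: "integrable M z" and zAz: "integrable M (\<lambda>\<omega>. z \<omega> \<bullet> (A *v z \<omega>))"
  shows "expectation z \<bullet> (A *v expectation z) \<le> expectation (\<lambda>\<omega>. z \<omega> \<bullet> (A *v z \<omega>))"
proof -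
  define a where "a = expectation z"
  have tangent: "2 * (z \<omega> \<bullet> (A *v a)) - a \<bullet> (A *v a) \<le> z \<omega> \<bullet> (A *v z \<omega>)" for \<omega>
  proof -
    have "0 \<le> (z \<omega> + (-1) *\<^sub>R a) \<bullet> (A *v (z \<omega> + (-1) *\<^sub>R a))" by (rule psd)
    also have "\<dots> = z \<omega> \<bullet> (A *v z \<omega>) - 2 * (a \<bullet> (A *v z \<omega>)) + a \<bullet> (A *v a)"
      unfolding symmetric_quadform_add_scaleR[OF sym] by simp
    also have "a \<bullet> (A *v z \<omega>) = z \<omega> \<bullet> (A *v a)" by (rule symmetric_quadform_swap[OF sym])
    finally show ?thesis by simp
  qed
  have "expectation (\<lambda>\<omega>. 2 * (z \<omega> \<bullet> (A *v a)) - a \<bullet> (A *v a)) \<le> expectation (\<lambda>\<omega>. z \<omega> \<bullet> (A *v z \<omega>))"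
    by (rule integral_mono) (use tangent z zAz in auto)
  also have "expectation (\<lambda>\<omega>. 2 * (z \<omega> \<bullet> (A *v a)) - a \<bullet> (A *v a)) = a \<bullet> (A *v a)"
    using z by (simp add: prob_space a_def)
  finally show ?thesis by (simp add: a_def)
qed

context excess_returns
begin

lemma secmom_nonneg: "t < T \<Longrightarrow> 0 \<le> v \<bullet> (secmom M P t *v v)"
  using secmom_posdef[of t v] by (cases "v = 0") auto

lemma secmom_mult_Kvec: "t < T \<Longrightarrow> secmom M P t *v Kvec M P t = meanv M P t"
  using matrix_mul_matrix_inv_right[OF posdef_imp_invertible[OF secmom_posdef]]
  by (simp add: Kvec_def matrix_vector_mul_assoc)

definition feedforward :: "real \<Rightarrow> (nat \<Rightarrow> real) \<Rightarrow> (nat \<Rightarrow> 'a \<Rightarrow> real^'n) \<Rightarrow> nat \<Rightarrow> 'a \<Rightarrow> real^'n"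
  where "feedforward x0 s v t \<omega> = v t \<omega>
    + (s t * (wealth x0 s P v t \<omega> - expectation (wealth x0 s P v t))) *\<^sub>R Kvec M P t"

definition residual_variance :: "real \<Rightarrow> (nat \<Rightarrow> real) \<Rightarrow> (nat \<Rightarrow> 'a \<Rightarrow> real^'n) \<Rightarrow> nat \<Rightarrow> real"
  where "residual_variance x0 s v t =
    expectation (\<lambda>\<omega>. feedforward x0 s v t \<omega> \<bullet> (secmom M P t *v feedforward x0 s v t \<omega>))
    - (meanv M P t \<bullet> expectation (v t))\<^sup>2"

context
  fixes x0 :: real and s :: "nat \<Rightarrow> real" and v :: "nat \<Rightarrow> 'a \<Rightarrow> real^'n" and t :: nat
  assumes t: "t < T" and v: "admissible M P (Suc t) v"
begin

lemma admissible_Suc_wealth: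
  shows "admissible M P t v"
    and "wealth x0 s P v t \<in> borel_measurable (F t)" and "wealth x0 s P v t \<in> borel_measurable M"
    and "integrable M (\<lambda>\<omega>. (wealth x0 s P v t \<omega>)\<^sup>2)" and "integrable M (wealth x0 s P v t)"
proof -
  show v': "admissible M P t v" using v by (rule admissible_mono) simp
  show "wealth x0 s P v t \<in> borel_measurable (F t)" using wealth_measurable_filt[OF v'] t by simp
  show "wealth x0 s P v t \<in> borel_measurable M" using wealth_measurable[OF v'] t by simp
  show "integrable M (\<lambda>\<omega>. (wealth x0 s P v t \<omega>)\<^sup>2)" using wealth_square_integrable[OF v'] t by simp
  show "integrable M (wealth x0 s P v t)" using integrable_wealth[OF v'] t by simp
qed

lemma expectation_wealth_Suc:
  "expectation (wealth x0 s P v (Suc t))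
    = s t * expectation (wealth x0 s P v t) + meanv M P t \<bullet> expectation (v t)"
  using admissible_Suc_wealth(5) inner_P_integral[OF t admissible_SucD(1,4)[OF v t]] by simp

lemma integrable_wealth_scaleR_control:
  "integrable M (\<lambda>\<omega>. wealth x0 s P v t \<omega> *\<^sub>R v t \<omega>)"
  by (rule integrable_scaleR_of_square_integrable[OF admissible_Suc_wealth(3) admissible_SucD(2)[OF v t]
        admissible_Suc_wealth(4) admissible_SucD(3)[OF v t]])

lemma expectation_wealth_Suc_square:
  "expectation (\<lambda>\<omega>. (wealth x0 s P v (Suc t) \<omega>)\<^sup>2)
    = (s t)\<^sup>2 * expectation (\<lambda>\<omega>. (wealth x0 s P v t \<omega>)\<^sup>2)
      + 2 * s t * (meanv M P t \<bullet> expectation (\<lambda>\<omega>. wealth x0 s P v t \<omega> *\<^sub>R v t \<omega>))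
      + expectation (\<lambda>\<omega>. v t \<omega> \<bullet> (secmom M P t *v v t \<omega>))"
proof -
  let ?x = "wealth x0 s P v t" and ?xv = "\<lambda>\<omega>. wealth x0 s P v t \<omega> *\<^sub>R v t \<omega>"
  note vt = admissible_SucD[OF v t]
  have "?xv \<in> borel_measurable (F t)"
    using admissible_Suc_wealth(2) vt(1) by measurable
  note Pxv = inner_P_integral[OF t this integrable_wealth_scaleR_control]
  note Pv2 = inner_P_square_integral[OF t vt(1,3)]
  have eq: "(\<lambda>\<omega>. (wealth x0 s P v (Suc t) \<omega>)\<^sup>2)
      = (\<lambda>\<omega>. (s t)\<^sup>2 * (?x \<omega>)\<^sup>2 + (2 * s t) * (P t \<omega> \<bullet> ?xv \<omega>) + (P t \<omega> \<bullet> v t \<omega>)\<^sup>2)"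
    by (simp add: power2_eq_square algebra_simps)
  show ?thesis
    unfolding eq using admissible_Suc_wealth(4) Pxv Pv2 by simp
qed

lemma feedforward_quadform_integral:
  shows "integrable M (\<lambda>\<omega>. feedforward x0 s v t \<omega> \<bullet> (secmom M P t *v feedforward x0 s v t \<omega>))"
    and "expectation (\<lambda>\<omega>. feedforward x0 s v t \<omega> \<bullet> (secmom M P t *v feedforward x0 s v t \<omega>))
      = expectation (\<lambda>\<omega>. v t \<omega> \<bullet> (secmom M P t *v v t \<omega>))
        + 2 * s t * (meanv M P t \<bullet> expectation (\<lambda>\<omega>. wealth x0 s P v t \<omega> *\<^sub>R v t \<omega>)
            - expectation (wealth x0 s P v t) * (meanv M P t \<bullet> expectation (v t)))
        + (s t)\<^sup>2 * Bcoef M P t * variance (wealth x0 s P v t)"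
proof -
  let ?x = "wealth x0 s P v t" and ?xv = "\<lambda>\<omega>. wealth x0 s P v t \<omega> *\<^sub>R v t \<omega>"
    and ?\<mu> = "expectation (wealth x0 s P v t)" and ?m = "meanv M P t" and ?K = "Kvec M P t"
  note vt = admissible_SucD[OF v t]
  have SK: "secmom M P t *v ?K = ?m" by (rule secmom_mult_Kvec[OF t])
  have KSv: "?K \<bullet> (secmom M P t *v v t \<omega>) = ?m \<bullet> v t \<omega>" for \<omega>
    using symmetric_quadform_swap[OF transpose_secmom, of ?K M P t "v t \<omega>"] SK
    by (simp add: inner_commute)
  have KSK: "?K \<bullet> (secmom M P t *v ?K) = Bcoef M P t"
    using SK by (simp add: Bcoef_eq_inner_Kvec inner_commute)
  have eq: "(\<lambda>\<omega>. feedforward x0 s v t \<omega> \<bullet> (secmom M P t *v feedforward x0 s v t \<omega>))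
      = (\<lambda>\<omega>. v t \<omega> \<bullet> (secmom M P t *v v t \<omega>)
          + (2 * s t) * (?m \<bullet> ?xv \<omega> - ?\<mu> * (?m \<bullet> v t \<omega>))
          + ((s t)\<^sup>2 * Bcoef M P t) * (?x \<omega> - ?\<mu>)\<^sup>2)"
    unfolding feedforward_def symmetric_quadform_add_scaleR[OF transpose_secmom] KSv KSK
    by (simp add: power2_eq_square algebra_simps)
  have "integrable M (\<lambda>\<omega>. v t \<omega> \<bullet> (secmom M P t *v v t \<omega>))"
    by (rule integrable_quadform[OF vt(2,3)])
  moreover have "integrable M (\<lambda>\<omega>. (?x \<omega> - ?\<mu>)\<^sup>2)"
    using admissible_Suc_wealth(4,5) by (simp add: power2_diff)
  moreover note integrable_wealth_scaleR_control vt(4)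
  ultimately show "integrable M (\<lambda>\<omega>. feedforward x0 s v t \<omega> \<bullet> (secmom M P t *v feedforward x0 s v t \<omega>))"
    and "expectation (\<lambda>\<omega>. feedforward x0 s v t \<omega> \<bullet> (secmom M P t *v feedforward x0 s v t \<omega>))
      = expectation (\<lambda>\<omega>. v t \<omega> \<bullet> (secmom M P t *v v t \<omega>))
        + 2 * s t * (?m \<bullet> expectation ?xv - ?\<mu> * (?m \<bullet> expectation (v t)))
        + (s t)\<^sup>2 * Bcoef M P t * variance (wealth x0 s P v t)"
    unfolding eq by (simp_all del: inner_scaleR_right)
qed

lemma integrable_feedforward: "integrable M (feedforward x0 s v t)"
  and expectation_feedforward: "expectation (feedforward x0 s v t) = expectation (v t)"
proof -
  have eq: "feedforward x0 s v t
      = (\<lambda>\<omega>. v t \<omega> + (s t * (wealth x0 s P v t \<omega> - expectation (wealth x0 s P v t))) *\<^sub>R Kvec M P t)"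
    by (rule ext) (simp add: feedforward_def)
  show "integrable M (feedforward x0 s v t)"
    unfolding eq using admissible_SucD(4)[OF v t] admissible_Suc_wealth(5) by simp
  show "expectation (feedforward x0 s v t) = expectation (v t)"
    unfolding eq using admissible_SucD(4)[OF v t] admissible_Suc_wealth(5) by (simp add: prob_space)
qed

lemma variance_wealth_Suc:
  "variance (wealth x0 s P v (Suc t))
    = (s t)\<^sup>2 * (1 - Bcoef M P t) * variance (wealth x0 s P v t) + residual_variance x0 s v t"
proof -
  have "integrable M (wealth x0 s P v (Suc t))" and "integrable M (\<lambda>\<omega>. (wealth x0 s P v (Suc t) \<omega>)\<^sup>2)"
    using integrable_wealth[OF v] wealth_square_integrable[OF v] t by simp_all
  then have var_Suc: "variance (wealth x0 s P v (Suc t))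
      = expectation (\<lambda>\<omega>. (wealth x0 s P v (Suc t) \<omega>)\<^sup>2) - (expectation (wealth x0 s P v (Suc t)))\<^sup>2"
    by (rule variance_eq)
  have var: "variance (wealth x0 s P v t)
      = expectation (\<lambda>\<omega>. (wealth x0 s P v t \<omega>)\<^sup>2) - (expectation (wealth x0 s P v t))\<^sup>2"
    by (rule variance_eq[OF admissible_Suc_wealth(5,4)])
  show ?thesis
    unfolding var_Suc residual_variance_def feedforward_quadform_integral(2)
    unfolding var expectation_wealth_Suc_square expectation_wealth_Suc
    by (simp add: power2_eq_square algebra_simps)
qed

lemma residual_variance_ge:
  "expectation (v t) \<bullet> (secmom M P t *v expectation (v t)) - (meanv M P t \<bullet> expectation (v t))\<^sup>2
    \<le> residual_variance x0 s v t"
  using quadform_expectation_le[OF transpose_secmom secmom_nonneg[OF t] integrable_feedforward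
      feedforward_quadform_integral(1)]
  unfolding residual_variance_def expectation_feedforward by simp

end

lemma objective_eq_sum_periods:
  assumes "1 \<le> T" and v: "admissible M P T v"
  shows "objective M x0 s P lam \<theta> T v = qcoef T lam s 1 * s 0 * x0
    + (\<Sum>t<T. qcoef T lam s (Suc t) * (meanv M P t \<bullet> expectation (v t))
        - pcoef T \<theta> s (Bcoef M P) (Suc t) * residual_variance x0 s v t)"
  unfolding objective_def
proof (rule mean_variance_objective_telescope[where B = "Bcoef M P"])
  have v': "admissible M P (Suc t) v" if "t < T" for t
    by (rule admissible_mono[OF v]) (use that in simp)
  show "expectation (wealth x0 s P v (Suc t))
      = s t * expectation (wealth x0 s P v t) + meanv M P t \<bullet> expectation (v t)" if "t < T" for t
    by (rule expectation_wealth_Suc[OF that v'[OF that]])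
  show "variance (wealth x0 s P v (Suc t))
      = (s t)\<^sup>2 * (1 - Bcoef M P t) * variance (wealth x0 s P v t) + residual_variance x0 s v t"
    if "t < T" for t
    by (rule variance_wealth_Suc[OF that v'[OF that]])
qed (use assms(1) in \<open>simp_all add: prob_space\<close>)

end


section \<open>The optimal strategy\<close>

lemma fb_wealth_eq_wealth:
  "fb_wealth x0 s P \<phi> t \<omega> = wealth x0 s P (\<lambda>t \<omega>. \<phi> t (fb_wealth x0 s P \<phi> t \<omega>)) t \<omega>"
  by (induction t arbitrary: \<omega>) simp_all

lemma ustar_strategy_eq_rule_of_wealth:
  "ustar_strategy M P x0 s lam \<theta> T t \<omega>
    = ustar_rule M P x0 s lam \<theta> T t (wealth x0 s P (ustar_strategy M P x0 s lam \<theta> T) t \<omega>)"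
proof -
  have "ustar_strategy M P x0 s lam \<theta> T
      = (\<lambda>t \<omega>. ustar_rule M P x0 s lam \<theta> T t (fb_wealth x0 s P (ustar_rule M P x0 s lam \<theta> T) t \<omega>))"
    by (intro ext) (rule ustar_strategy_def)
  then show ?thesis by (simp add: fb_wealth_eq_wealth[symmetric])
qed

locale mean_variance_problem = excess_returns M P T
  for M :: "'a measure" and P :: "nat \<Rightarrow> 'a \<Rightarrow> real^'n" and T +
  fixes s lam \<theta> :: "nat \<Rightarrow> real" and x0 :: real
  assumes T_pos: "1 \<le> T" and s_nonzero: "\<And>t. t < T \<Longrightarrow> s t \<noteq> 0"
    and Bcoef_bounds: "\<And>t. t < T \<Longrightarrow> 0 < Bcoef M P t \<and> Bcoef M P t < 1"
    and \<theta>_nonneg: "\<forall>t\<in>{1..T}. 0 \<le> \<theta> t" and \<theta>_T_pos: "0 < \<theta> T"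
begin

abbreviation "p_coef \<equiv> pcoef T \<theta> s (Bcoef M P)"
abbreviation "q_coef \<equiv> qcoef T lam s"
abbreviation "mean_control t \<equiv> q_coef (Suc t) / (2 * p_coef (Suc t)) / (1 - Bcoef M P t)"
abbreviation "optimal_control \<equiv> ustar_strategy M P x0 s lam \<theta> T"
abbreviation "optimal_wealth \<equiv> wealth x0 s P optimal_control"
abbreviation "mean_path \<equiv> ustar_xbar M P x0 s lam \<theta> T"
abbreviation "optimal_value \<equiv> q_coef 1 * s 0 * x0
  + (\<Sum>t<T. p_coef (Suc t) * (q_coef (Suc t) / (2 * p_coef (Suc t)))\<^sup>2 * Bcoef M P t / (1 - Bcoef M P t))"

lemma p_coef_pos: "1 \<le> t \<Longrightarrow> 0 < p_coef t"
  by (rule pcoef_pos) (use \<theta>_nonneg \<theta>_T_pos Bcoef_bounds s_nonzero in auto)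

lemma mean_path_eq_sum:
  "mean_path t = x0 * (\<Prod>k<t. s k) + (\<Sum>j<t. q_coef (Suc j) / (2 * p_coef (Suc j))
      * (Bcoef M P j / (1 - Bcoef M P j)) * (\<Prod>l\<in>{Suc j..<t}. s l))"
  unfolding ustar_xbar_def by (rule xbar_eq_sum)

lemma optimal_control_eq:
  "optimal_control t \<omega> = (mean_control t - s t * (optimal_wealth t \<omega> - mean_path t)) *\<^sub>R Kvec M P t"
  by (subst ustar_strategy_eq_rule_of_wealth) (simp add: ustar_rule_def algebra_simps)

text \<open>Unfold only instances of this: with \<open>t\<close> schematic, rewriting loops on the strategy occurring
  inside \<open>optimal_wealth\<close>.\<close>
lemma optimal_control_fun_eq:
  "optimal_control t = (\<lambda>\<omega>. (mean_control t - s t * (optimal_wealth t \<omega> - mean_path t)) *\<^sub>R Kvec M P t)"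
  using optimal_control_eq by (intro ext)

lemma admissible_optimal_control: "t \<le> T \<Longrightarrow> admissible M P t optimal_control"
proof (induction t)
  case (Suc t)
  then have t: "t < T" and adm: "admissible M P t optimal_control" by auto
  have x: "optimal_wealth t \<in> borel_measurable (F t)" using wealth_measurable_filt[OF adm] t by simp
  have x2: "integrable M (\<lambda>\<omega>. (optimal_wealth t \<omega>)\<^sup>2)" using wealth_square_integrable[OF adm] t by simp
  have ix: "integrable M (optimal_wealth t)" using integrable_wealth[OF adm] t by simp
  have "optimal_control t \<in> borel_measurable (F t)"
    unfolding optimal_control_fun_eq[of t]
    by (intro borel_measurable_scaleR borel_measurable_diff borel_measurable_times
        borel_measurable_const x)
  moreover have "integrable M (\<lambda>\<omega>. (norm (optimal_control t \<omega>))\<^sup>2)"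
  proof -
    have sq: "(a - b * (y - d))\<^sup>2 = (a + b * d)\<^sup>2 - (2 * (a + b * d) * b) * y + b\<^sup>2 * y\<^sup>2"
      for a b y d :: real
      by (simp add: power2_eq_square algebra_simps)
    show ?thesis
      unfolding optimal_control_fun_eq[of t] norm_scaleR power_mult_distrib power2_abs sq
      using ix x2 by simp
  qed
  ultimately show ?case using adm unfolding admissible_def by (auto simp: less_Suc_eq)
qed (simp add: admissible_def)

lemma expectation_optimal_control_of_wealth:
  assumes "t < T" and "expectation (optimal_wealth t) = mean_path t"
  shows "expectation (optimal_control t) = mean_control t *\<^sub>R Kvec M P t"
proof -
  have x: "integrable M (optimal_wealth t)"
    using integrable_wealth admissible_optimal_control assms(1) by simp
  then have "expectation (\<lambda>\<omega>. mean_control t - s t * (optimal_wealth t \<omega> - mean_path t)) = mean_control t"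
    using assms(2) by (simp add: prob_space)
  then show ?thesis
    unfolding optimal_control_fun_eq[of t] using x by simp
qed

lemma expectation_optimal_wealth: "t \<le> T \<Longrightarrow> expectation (optimal_wealth t) = mean_path t"
proof (induction t)
  case (Suc t)
  then have t: "t < T" and IH: "expectation (optimal_wealth t) = mean_path t" by auto
  have "expectation (optimal_wealth (Suc t))
      = s t * mean_path t + meanv M P t \<bullet> (mean_control t *\<^sub>R Kvec M P t)"
    using expectation_wealth_Suc[OF t admissible_optimal_control] Suc.prems IH
      expectation_optimal_control_of_wealth[OF t IH]
    by simp
  also have "\<dots> = mean_path (Suc t)"
    using Bcoef_bounds[OF t] by (simp add: ustar_xbar_def Bcoef_eq_inner_Kvec[symmetric])
  finally show ?case .
qed (simp add: ustar_xbar_def prob_space)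

lemma expectation_optimal_control:
  "t < T \<Longrightarrow> expectation (optimal_control t) = mean_control t *\<^sub>R Kvec M P t"
  using expectation_optimal_control_of_wealth expectation_optimal_wealth by simp

lemma optimal_control_centered:
  "t < T \<Longrightarrow> optimal_control t \<omega> - expectation (optimal_control t)
    = (- (s t * (optimal_wealth t \<omega> - expectation (optimal_wealth t)))) *\<^sub>R Kvec M P t"
  by (simp add: optimal_control_eq expectation_optimal_control expectation_optimal_wealth
      scaleR_left_diff_distrib[symmetric])

lemma feedforward_optimal_control:
  "t < T \<Longrightarrow> feedforward x0 s optimal_control t \<omega> = mean_control t *\<^sub>R Kvec M P t"
  by (simp add: feedforward_def optimal_control_eq expectation_optimal_wealth
      scaleR_left_distrib[symmetric])

lemma objective_le_optimal_value:
  assumes v: "admissible M P T v"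
  shows "objective M x0 s P lam \<theta> T v \<le> optimal_value"
  unfolding objective_eq_sum_periods[OF T_pos v]
proof (intro add_left_mono sum_mono)
  fix t assume "t \<in> {..<T}"
  then have t: "t < T" by simp
  let ?a = "expectation (v t)" and ?m = "meanv M P t" and ?S = "secmom M P t"
  have "(?m \<bullet> ?a)\<^sup>2 \<le> Bcoef M P t * (?a \<bullet> (?S *v ?a))"
    unfolding Bcoef_eq_inner_Kvec
    by (rule symmetric_psd_cauchy_schwarz[OF transpose_secmom secmom_nonneg[OF t] secmom_mult_Kvec[OF t]])
      (use Bcoef_bounds[OF t] in \<open>simp add: Bcoef_eq_inner_Kvec\<close>)
  then have "q_coef (Suc t) * (?m \<bullet> ?a) - p_coef (Suc t) * (?a \<bullet> (?S *v ?a) - (?m \<bullet> ?a)\<^sup>2)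
      \<le> p_coef (Suc t) * (q_coef (Suc t) / (2 * p_coef (Suc t)))\<^sup>2 * Bcoef M P t / (1 - Bcoef M P t)"
    using mean_variance_tradeoff_le[OF p_coef_pos] Bcoef_bounds[OF t] by simp
  moreover have "?a \<bullet> (?S *v ?a) - (?m \<bullet> ?a)\<^sup>2 \<le> residual_variance x0 s v t"
    by (rule residual_variance_ge[OF t admissible_mono[OF v]]) (use t in simp)
  then have "q_coef (Suc t) * (?m \<bullet> ?a) - p_coef (Suc t) * residual_variance x0 s v t
      \<le> q_coef (Suc t) * (?m \<bullet> ?a) - p_coef (Suc t) * (?a \<bullet> (?S *v ?a) - (?m \<bullet> ?a)\<^sup>2)"
    using p_coef_pos[of "Suc t"] by (simp add: mult_left_mono)
  ultimately show "q_coef (Suc t) * (?m \<bullet> ?a) - p_coef (Suc t) * residual_variance x0 s v t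
      \<le> p_coef (Suc t) * (q_coef (Suc t) / (2 * p_coef (Suc t)))\<^sup>2 * Bcoef M P t / (1 - Bcoef M P t)"
    by linarith
qed

lemma objective_optimal_control: "objective M x0 s P lam \<theta> T optimal_control = optimal_value"
  unfolding objective_eq_sum_periods[OF T_pos admissible_optimal_control[OF order_refl]]
proof (intro arg_cong[where f = "\<lambda>y. q_coef 1 * s 0 * x0 + y"] sum.cong refl)
  fix t assume "t \<in> {..<T}"
  then have t: "t < T" by simp
  let ?a = "mean_control t *\<^sub>R Kvec M P t"
  have "residual_variance x0 s optimal_control t = ?a \<bullet> (secmom M P t *v ?a) - (meanv M P t \<bullet> ?a)\<^sup>2"
    unfolding residual_variance_def feedforward_optimal_control[OF t] expectation_optimal_control[OF t]
    by (simp add: prob_space)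
  then show "q_coef (Suc t) * (meanv M P t \<bullet> expectation (optimal_control t))
      - p_coef (Suc t) * residual_variance x0 s optimal_control t
      = p_coef (Suc t) * (q_coef (Suc t) / (2 * p_coef (Suc t)))\<^sup>2 * Bcoef M P t / (1 - Bcoef M P t)"
    using mean_variance_tradeoff_optimal[OF secmom_mult_Kvec[OF t] p_coef_pos, of "Suc t" "q_coef (Suc t)"]
      Bcoef_bounds[OF t]
    by (simp add: expectation_optimal_control[OF t] Bcoef_eq_inner_Kvec)
qed

end

theorem proposition1:
  fixes M :: "'a measure" and P :: "nat \<Rightarrow> 'a \<Rightarrow> real^'n"
    and s lam \<theta> :: "nat \<Rightarrow> real" and x0 :: real and T :: nat
  defines "B \<equiv> Bcoef M P" and "K \<equiv> Kvec M P"
    and "p \<equiv> pcoef T \<theta> s (Bcoef M P)"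
    and "q \<equiv> qcoef T lam s"
    and "xb \<equiv> ustar_xbar M P x0 s lam \<theta> T"
    and "ustar \<equiv> ustar_strategy M P x0 s lam \<theta> T"
    and "x \<equiv> wealth x0 s P (ustar_strategy M P x0 s lam \<theta> T)"
  assumes "prob_space M"
    and "T \<ge> 1"
    and "\<forall>t<T. s t > 1"
    and "\<forall>t<T. P t \<in> borel_measurable M"
    and "prob_space.indep_vars M (\<lambda>_. borel) P {..<T}"
    and "\<forall>t<T. integrable M (\<lambda>\<omega>. (norm (P t \<omega>))\<^sup>2)"
    and "\<forall>t<T. \<forall>v. v \<noteq> 0 \<longrightarrow> v \<bullet> (secmom M P t *v v) > 0"
    and "\<forall>t<T. 0 < B t \<and> B t < 1"
    and "\<forall>t\<in>{1..T}. \<theta> t \<ge> 0"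
    and "\<theta> T > 0"
  shows "(\<forall>t\<in>{1..T}. p t > 0)
    \<and> (\<forall>t\<le>T. xb t = x0 * (\<Prod>k<t. s k)
          + (\<Sum>j<t. q (Suc j) / (2 * p (Suc j)) * (B j / (1 - B j)) * (\<Prod>l\<in>{Suc j..<t}. s l)))
    \<and> admissible M P T ustar
    \<and> (\<forall>v. admissible M P T v \<longrightarrow> objective M x0 s P lam \<theta> T v \<le> objective M x0 s P lam \<theta> T ustar)
    \<and> (\<forall>t\<le>T. integral\<^sup>L M (x t) = xb t)
    \<and> (\<forall>t<T. \<forall>\<omega>\<in>space M. ustar t \<omega> - integral\<^sup>L M (ustar t)
            = (- (s t * (x t \<omega> - integral\<^sup>L M (x t)))) *\<^sub>R K t)
    \<and> (\<forall>t<T. integral\<^sup>L M (ustar t) = (q (Suc t) / (2 * p (Suc t)) / (1 - B t)) *\<^sub>R K t)"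
proof -
  interpret mean_variance_problem M P T s lam \<theta> x0
    by (intro mean_variance_problem.intro excess_returns.intro mean_variance_problem_axioms.intro
        excess_returns_axioms.intro) (use assms(8-) in \<open>auto simp: B_def\<close>)
  show ?thesis
    unfolding B_def K_def p_def q_def xb_def ustar_def x_def
    using p_coef_pos admissible_optimal_control[OF order_refl] objective_le_optimal_value
      expectation_optimal_wealth optimal_control_centered expectation_optimal_control
    by (auto simp: mean_path_eq_sum objective_optimal_control)
qed

end
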